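(* Let $(X,d)$ be a complete CAT(0) space and let $(A,B)$ be a pair of nonempty, closed, convex, bounded subsets of $X$ which is proximal. Let $T:A\cup B\to A\cup B$ be a cyclic relatively nonexpansive mapping. Then $T$ is nonexpansive, i.e., $d(Tx,Ty)\le d(x,y)$ for all $x,y\in A\cup B$.
   Context: A CAT(0) space is a geodesic space in which every geodesic triangle satisfies $d(x,y)\le d_{\mathbb{E}^2}(\bar x,\bar y)$ for all points $x,y$ of the triangle and their comparison points in a Euclidean comparison triangle with the same side lengths. $\operatorname{dist}(A,B)=\inf\{d(x,y):x\in A,y\in B\}$. The pair $(A,B)$ is proximal if for every $(a,b)\in A\times B$ there is $(a',b')\in A\times B$ with $d(a,b')=d(a',b)=\operatorname{dist}(A,B)$. $T$ is relatively nonexpansive if $d(Tx,Ty)\le d(x,y)$ for all $x\in A$, $y\in B$, and cyclic if $T(A)\subseteq B$, $T(B)\subseteq A$. *)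

theory Defs
  imports "HOL-Analysis.Analysis"
begin

definition geodesic_path :: "'a::metric_space \<Rightarrow> 'a \<Rightarrow> (real \<Rightarrow> 'a) \<Rightarrow> bool" where
  "geodesic_path x y c \<longleftrightarrow> c 0 = x \<and> c (dist x y) = y \<and>
     (\<forall>s\<in>{0..dist x y}. \<forall>t\<in>{0..dist x y}. dist (c s) (c t) = \<bar>s - t\<bar>)"

definition geodesic_space :: "'a::metric_space itself \<Rightarrow> bool" where
  "geodesic_space TYPE('a) \<longleftrightarrow> (\<forall>x y::'a. \<exists>c. geodesic_path x y c)"

text \<open>x is the point at parameter s of the side c (of length l) and xb is its comparison
  point on the Euclidean segment from P to Q.\<close>
definition on_side :: "(real \<Rightarrow> 'a) \<Rightarrow> real \<Rightarrow> real^2 \<Rightarrow> real^2 \<Rightarrow> 'a \<Rightarrow> real^2 \<Rightarrow> bool" where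
  "on_side c l P Q x xb \<longleftrightarrow> (\<exists>s\<in>{0..l}. x = c s \<and> xb = P + (s / l) *\<^sub>R (Q - P))"

definition CAT0_space :: "'a::metric_space itself \<Rightarrow> bool" where
  "CAT0_space TYPE('a) \<longleftrightarrow> geodesic_space TYPE('a) \<and>
    (\<forall>(p::'a) q r c1 c2 c3 (P::real^2) Q R.
       geodesic_path p q c1 \<and> geodesic_path q r c2 \<and> geodesic_path r p c3 \<and>
       dist P Q = dist p q \<and> dist Q R = dist q r \<and> dist R P = dist r p \<longrightarrow>
       (let cmp = (\<lambda>x xb. on_side c1 (dist p q) P Q x xb \<or> on_side c2 (dist q r) Q R x xb
                         \<or> on_side c3 (dist r p) R P x xb)
        in \<forall>x xb y yb. cmp x xb \<and> cmp y yb \<longrightarrow> dist x y \<le> dist xb yb))"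

definition geod_convex :: "'a::metric_space set \<Rightarrow> bool" where
  "geod_convex A \<longleftrightarrow> (\<forall>x\<in>A. \<forall>y\<in>A. \<forall>c. geodesic_path x y c \<longrightarrow> c ` {0..dist x y} \<subseteq> A)"

definition proximal_pair :: "'a::metric_space set \<Rightarrow> 'a set \<Rightarrow> bool" where
  "proximal_pair A B \<longleftrightarrow> (\<forall>a\<in>A. \<forall>b\<in>B. \<exists>a'\<in>A. \<exists>b'\<in>B.
      dist a b' = setdist A B \<and> dist a' b = setdist A B)"

definition cyclic_map :: "('a \<Rightarrow> 'a) \<Rightarrow> 'a set \<Rightarrow> 'a set \<Rightarrow> bool" where
  "cyclic_map T A B \<longleftrightarrow> T ` A \<subseteq> B \<and> T ` B \<subseteq> A"

definition rel_nonexpansive :: "('a::metric_space \<Rightarrow> 'a) \<Rightarrow> 'a set \<Rightarrow> 'a set \<Rightarrow> bool" where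
  "rel_nonexpansive T A B \<longleftrightarrow> (\<forall>x\<in>A. \<forall>y\<in>B. dist (T x) (T y) \<le> dist x y)"

end

theory Submission
  imports Defs
begin

text \<open>
  For x, y in A pick proximal partners x', y' in B, at distance
  D = dist(A,B). Then x', y' are nearest points of B to x, y, and T x, T y are nearest
  points of B to T x', T y' (relative nonexpansiveness forces dist (T x) (T x') = D).
  Nearest points onto a convex set in a CAT(0) space make obtuse angles, which gives
  2 d(u,v)^2 + 2 D^2 \<le> d(u,v')^2 + d(v,u')^2 for both quadruples, while the CAT(0)
  quadrilateral inequality bounds d(x,y')^2 + d(y,x')^2 by d(x,y)^2 + d(x',y')^2 + 2 D^2.
  Chaining these through d(T x, T y') \<le> d(x, y') and d(T y, T x') \<le> d(y, x') yields
  d(T x, T y) \<le> d(x', y') \<le> d(x, y).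
\<close>

lemma euclidean_triangle_exists:
  fixes a b c :: real
  assumes "b > 0" "a \<ge> 0" "c \<ge> 0" "a \<le> b + c" "b \<le> a + c" "c \<le> a + b"
  shows "\<exists>P Q R :: real^2. dist P Q = a \<and> dist Q R = b \<and> dist R P = c"
proof -
  define u where "u = (a\<^sup>2 + b\<^sup>2 - c\<^sup>2) / (2 * b)"
  have "(a - b)\<^sup>2 \<le> c\<^sup>2" using assms by (intro power2_le_iff_abs_le[THEN iffD2]) auto
  then have upper: "a\<^sup>2 + b\<^sup>2 - c\<^sup>2 \<le> 2 * a * b" by (simp add: power2_eq_square algebra_simps)
  have "c\<^sup>2 \<le> (a + b)\<^sup>2" using assms by (intro power_mono) auto
  then have lower: "- (2 * a * b) \<le> a\<^sup>2 + b\<^sup>2 - c\<^sup>2" by (simp add: power2_eq_square algebra_simps)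
  have "\<bar>u\<bar> \<le> a" using upper lower assms unfolding u_def by (auto simp: abs_le_iff field_simps)
  then have "u\<^sup>2 \<le> a\<^sup>2" by (metis abs_le_square_iff abs_of_nonneg assms(2))
  define v where "v = sqrt (a\<^sup>2 - u\<^sup>2)"
  have v2: "v\<^sup>2 = a\<^sup>2 - u\<^sup>2" unfolding v_def using \<open>u\<^sup>2 \<le> a\<^sup>2\<close> by simp
  define e1 e2 :: "real^2" where "e1 = axis 1 1" and "e2 = axis 2 1"
  have basis: "e1 \<bullet> e1 = 1" "e2 \<bullet> e2 = 1" "e1 \<bullet> e2 = 0" "e2 \<bullet> e1 = 0"
    unfolding e1_def e2_def by (auto simp: inner_axis_axis)
  define P where "P = u *\<^sub>R e1 + v *\<^sub>R e2"
  define R where "R = b *\<^sub>R e1"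
  have "(dist P 0)\<^sup>2 = a\<^sup>2"
    unfolding dist_norm power2_norm_eq_inner P_def using v2
    by (simp add: basis power2_eq_square algebra_simps)
  moreover have "(dist 0 R)\<^sup>2 = b\<^sup>2"
    unfolding dist_norm power2_norm_eq_inner R_def by (simp add: basis power2_eq_square)
  moreover have "(dist R P)\<^sup>2 = c\<^sup>2"
  proof -
    have "(dist R P)\<^sup>2 = b\<^sup>2 - 2 * b * u + a\<^sup>2"
      unfolding dist_norm power2_norm_eq_inner R_def P_def using v2
      by (simp add: basis power2_eq_square algebra_simps)
    also have "\<dots> = c\<^sup>2" unfolding u_def using assms by (simp add: field_simps)
    finally show ?thesis .
  qed
  ultimately show ?thesis using assms by (metis power2_eq_iff_nonneg zero_le_dist less_imp_le)
qed

lemma dist_affine_combination_power2: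
  fixes P Q R :: "'b::real_inner"
  shows "(dist P (Q + t *\<^sub>R (R - Q)))\<^sup>2
    = (1 - t) * (dist P Q)\<^sup>2 + t * (dist P R)\<^sup>2 - t * (1 - t) * (dist Q R)\<^sup>2"
  unfolding dist_norm power2_norm_eq_inner
  by (simp add: inner_commute power2_eq_square algebra_simps)

lemma CAT0_geodesic_path_exists:
  assumes "CAT0_space TYPE('a::metric_space)"
  obtains c where "geodesic_path (x::'a) y c"
  using assms unfolding CAT0_space_def geodesic_space_def by blast

lemma geod_convex_geodesic_point:
  assumes "geod_convex B" "x \<in> B" "y \<in> B" "geodesic_path x y c" "0 \<le> t" "t \<le> 1"
  shows "c (t * dist x y) \<in> B"
proof -
  have "t * dist x y \<le> 1 * dist x y" using assms by (intro mult_right_mono) auto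
  then show ?thesis using assms unfolding geod_convex_def by fastforce
qed

lemma CAT0_comparison:
  fixes P Q R :: "real^2"
  assumes "CAT0_space TYPE('a::metric_space)"
    and "geodesic_path p q c1" "geodesic_path q r c2" "geodesic_path r p c3"
    and "dist P Q = dist (p::'a) q" "dist Q R = dist q r" "dist R P = dist r p"
    and "on_side c1 (dist p q) P Q x xb \<or> on_side c2 (dist q r) Q R x xb \<or> on_side c3 (dist r p) R P x xb"
    and "on_side c1 (dist p q) P Q y yb \<or> on_side c2 (dist q r) Q R y yb \<or> on_side c3 (dist r p) R P y yb"
  shows "dist x y \<le> dist xb yb"
proof -
  have "\<forall>x xb y yb. (on_side c1 (dist p q) P Q x xb \<or> on_side c2 (dist q r) Q R x xb \<or> on_side c3 (dist r p) R P x xb)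
     \<and> (on_side c1 (dist p q) P Q y yb \<or> on_side c2 (dist q r) Q R y yb \<or> on_side c3 (dist r p) R P y yb)
     \<longrightarrow> dist x y \<le> dist xb yb"
    using assms(1-7) unfolding CAT0_space_def Let_def by blast
  then show ?thesis using assms(8,9) by blast
qed

text \<open>The CN inequality of Bruhat and Tits: the comparison point of c (t d(y,z)) is
  the point Q + t (R - Q) of the comparison triangle, to which the Euclidean identity applies.\<close>

lemma CAT0_CN_inequality:
  fixes x y z :: "'a::metric_space"
  assumes cat: "CAT0_space TYPE('a)" and c: "geodesic_path y z c" and "0 \<le> t" "t \<le> 1"
  shows "(dist x (c (t * dist y z)))\<^sup>2
    \<le> (1 - t) * (dist x y)\<^sup>2 + t * (dist x z)\<^sup>2 - t * (1 - t) * (dist y z)\<^sup>2"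
proof (cases "y = z")
  case True
  then show ?thesis using c unfolding geodesic_path_def by (simp add: algebra_simps)
next
  case False
  then have pos: "dist y z > 0" by simp
  obtain c1 where c1: "geodesic_path x y c1" using CAT0_geodesic_path_exists[OF cat] .
  obtain c3 where c3: "geodesic_path z x c3" using CAT0_geodesic_path_exists[OF cat] .
  obtain P Q R :: "real^2"
    where PQR: "dist P Q = dist x y" "dist Q R = dist y z" "dist R P = dist z x"
    using euclidean_triangle_exists[of "dist y z" "dist x y" "dist z x"] pos
    by (metis dist_commute dist_triangle zero_le_dist add.commute)
  have x_side: "on_side c1 (dist x y) P Q x P"
    unfolding on_side_def using c1 unfolding geodesic_path_def by (intro bexI[of _ 0]) auto
  have c_side: "on_side c (dist y z) Q R (c (t * dist y z)) (Q + t *\<^sub>R (R - Q))"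
    unfolding on_side_def using pos assms(3,4)
    by (intro bexI[of _ "t * dist y z"]) (auto simp: mult_le_cancel_right1)
  have "dist x (c (t * dist y z)) \<le> dist P (Q + t *\<^sub>R (R - Q))"
    using CAT0_comparison[OF cat c1 c c3 PQR] x_side c_side by blast
  then have "(dist x (c (t * dist y z)))\<^sup>2 \<le> (dist P (Q + t *\<^sub>R (R - Q)))\<^sup>2"
    by (simp add: power_mono)
  also have "\<dots> = (1 - t) * (dist x y)\<^sup>2 + t * (dist x z)\<^sup>2 - t * (1 - t) * (dist y z)\<^sup>2"
    unfolding dist_affine_combination_power2 using PQR by (simp add: dist_commute)
  finally show ?thesis .
qed

lemma le_of_le_add_mult_small:
  fixes X Y Z :: real
  assumes "Z \<ge> 0" and le: "\<And>t. 0 < t \<Longrightarrow> t \<le> 1 \<Longrightarrow> X \<le> Y + t * Z"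
  shows "X \<le> Y"
proof (rule field_le_epsilon)
  fix e :: real assume "e > 0"
  define t where "t = min 1 (e / (Z + 1))"
  have "0 < t" "t \<le> 1" unfolding t_def using \<open>e > 0\<close> \<open>Z \<ge> 0\<close> by auto
  have "t * Z \<le> e / (Z + 1) * Z" unfolding t_def using \<open>Z \<ge> 0\<close> by (intro mult_right_mono) auto
  also have "\<dots> \<le> e" using \<open>e > 0\<close> \<open>Z \<ge> 0\<close> by (simp add: field_simps)
  finally show "X \<le> Y + e" using le[OF \<open>0 < t\<close> \<open>t \<le> 1\<close>] by simp
qed

text \<open>Compare b with the points of the geodesic from a to c at parameter t: by the CN inequality
  the error term is O(t), and it vanishes as t \<rightarrow> 0.\<close>

lemma CAT0_nearest_point_obtuse:
  fixes a b c :: "'a::metric_space"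
  assumes cat: "CAT0_space TYPE('a)" and "geod_convex B" "a \<in> B" "c \<in> B"
    and nearest: "\<And>z. z \<in> B \<Longrightarrow> dist a b \<le> dist z b"
  shows "(dist a c)\<^sup>2 + (dist a b)\<^sup>2 \<le> (dist b c)\<^sup>2"
proof -
  obtain g where g: "geodesic_path a c g" using CAT0_geodesic_path_exists[OF cat] .
  have "(dist a b)\<^sup>2 \<le> ((dist b c)\<^sup>2 - (dist a c)\<^sup>2) + t * (dist a c)\<^sup>2" if "0 < t" "t \<le> 1" for t
  proof -
    have "dist a b \<le> dist (g (t * dist a c)) b"
      using nearest geod_convex_geodesic_point[OF assms(2-4) g] that by simp
    then have "(dist a b)\<^sup>2 \<le> (dist b (g (t * dist a c)))\<^sup>2"
      by (simp add: power_mono dist_commute)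
    also have "\<dots> \<le> (1 - t) * (dist b a)\<^sup>2 + t * (dist b c)\<^sup>2 - t * (1 - t) * (dist a c)\<^sup>2"
      using CAT0_CN_inequality[OF cat g] that by simp
    finally have "t * (dist a b)\<^sup>2 \<le> t * ((dist b c)\<^sup>2 - (dist a c)\<^sup>2 + t * (dist a c)\<^sup>2)"
      unfolding dist_commute[of b a] by (simp add: algebra_simps)
    then show ?thesis using \<open>0 < t\<close> by simp
  qed
  then have "(dist a b)\<^sup>2 \<le> (dist b c)\<^sup>2 - (dist a c)\<^sup>2"
    by (rule le_of_le_add_mult_small[OF zero_le_power2])
  then show ?thesis by simp
qed

lemma CAT0_quadrilateral_inequality:
  fixes x y z w :: "'a::metric_space"
  assumes cat: "CAT0_space TYPE('a)"
  shows "(dist x z)\<^sup>2 + (dist y w)\<^sup>2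
    \<le> (dist x y)\<^sup>2 + (dist y z)\<^sup>2 + (dist z w)\<^sup>2 + (dist w x)\<^sup>2"
proof -
  obtain g where g: "geodesic_path x z g" using CAT0_geodesic_path_exists[OF cat] .
  define m where "m = g ((1/2) * dist x z)"
  have ym: "(dist y m)\<^sup>2 \<le> (1/2) * (dist y x)\<^sup>2 + (1/2) * (dist y z)\<^sup>2 - (1/4) * (dist x z)\<^sup>2"
    using CAT0_CN_inequality[OF cat g, of "1/2" y] unfolding m_def by simp
  have wm: "(dist w m)\<^sup>2 \<le> (1/2) * (dist w x)\<^sup>2 + (1/2) * (dist w z)\<^sup>2 - (1/4) * (dist x z)\<^sup>2"
    using CAT0_CN_inequality[OF cat g, of "1/2" w] unfolding m_def by simp
  have "(dist y w)\<^sup>2 \<le> (dist y m + dist w m)\<^sup>2"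
    by (intro power_mono) (auto simp: dist_triangle2)
  also have "\<dots> \<le> 2 * ((dist y m)\<^sup>2 + (dist w m)\<^sup>2)"
    using zero_le_power2[of "dist y m - dist w m"] by (simp add: power2_eq_square algebra_simps)
  finally show ?thesis using ym wm by (simp add: dist_commute)
qed

lemma CAT0_nearest_points_sum:
  fixes u v u' v' :: "'a::metric_space"
  assumes cat: "CAT0_space TYPE('a)" and "geod_convex B" "u \<in> B" "v \<in> B"
    and "dist u u' = D" "dist v v' = D"
    and far: "\<And>z. z \<in> B \<Longrightarrow> D \<le> dist z u'" "\<And>z. z \<in> B \<Longrightarrow> D \<le> dist z v'"
  shows "2 * (dist u v)\<^sup>2 + 2 * D\<^sup>2 \<le> (dist u v')\<^sup>2 + (dist v u')\<^sup>2"
proof -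
  have "(dist u v)\<^sup>2 + D\<^sup>2 \<le> (dist u v')\<^sup>2"
    using CAT0_nearest_point_obtuse[OF cat assms(2) \<open>v \<in> B\<close> \<open>u \<in> B\<close>, of v'] far assms(6)
    by (simp add: dist_commute)
  moreover have "(dist v u)\<^sup>2 + D\<^sup>2 \<le> (dist v u')\<^sup>2"
    using CAT0_nearest_point_obtuse[OF cat assms(2) \<open>u \<in> B\<close> \<open>v \<in> B\<close>, of u'] far assms(5)
    by (simp add: dist_commute)
  ultimately show ?thesis by (simp add: dist_commute)
qed

lemma rel_nonexpansive_proximal_image:
  assumes "cyclic_map T A B" "rel_nonexpansive T A B"
    and "x \<in> A" "x' \<in> B" "dist x x' = setdist A B"
  shows "dist (T x) (T x') = setdist A B"
proof (rule antisym)
  have "dist (T x) (T x') \<le> dist x x'"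
    using assms(2-4) unfolding rel_nonexpansive_def by blast
  then show "dist (T x) (T x') \<le> setdist A B" using assms(5) by simp
  have "T x \<in> B" "T x' \<in> A" using assms unfolding cyclic_map_def by auto
  then show "setdist A B \<le> dist (T x) (T x')"
    using setdist_le_dist by (metis dist_commute)
qed

lemma rel_nonexpansive_within_side:
  fixes A B :: "'a::metric_space set"
  assumes cat: "CAT0_space TYPE('a)" and convex: "geod_convex B" and "B \<noteq> {}"
    and prox: "proximal_pair A B" and cyc: "cyclic_map T A B"
    and rel: "rel_nonexpansive T A B"
    and "x \<in> A" "y \<in> A"
  shows "dist (T x) (T y) \<le> dist x y"
proof -
  define D where "D = setdist A B"
  have partner: "\<exists>z'\<in>B. dist z z' = D" if "z \<in> A" for z
    using prox \<open>B \<noteq> {}\<close> that unfolding proximal_pair_def D_def by blast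
  obtain x' y' where "x' \<in> B" "y' \<in> B" and x': "dist x x' = D" and y': "dist y y' = D"
    using partner[OF \<open>x \<in> A\<close>] partner[OF \<open>y \<in> A\<close>] by blast
  have Tx': "dist (T x) (T x') = D" and Ty': "dist (T y) (T y') = D"
    using rel_nonexpansive_proximal_image[OF cyc rel] \<open>x \<in> A\<close> \<open>y \<in> A\<close> \<open>x' \<in> B\<close> \<open>y' \<in> B\<close>
      x' y' unfolding D_def by auto
  have images: "T x \<in> B" "T y \<in> B" "T x' \<in> A" "T y' \<in> A"
    using cyc \<open>x \<in> A\<close> \<open>y \<in> A\<close> \<open>x' \<in> B\<close> \<open>y' \<in> B\<close> unfolding cyclic_map_def by auto
  have far: "D \<le> dist z a" if "z \<in> B" "a \<in> A" for z a
    using setdist_le_dist[OF that(2,1)] unfolding D_def by (simp add: dist_commute)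
  have partners: "2 * (dist x' y')\<^sup>2 + 2 * D\<^sup>2 \<le> (dist y x')\<^sup>2 + (dist x y')\<^sup>2"
    using CAT0_nearest_points_sum[OF cat convex \<open>x' \<in> B\<close> \<open>y' \<in> B\<close>, of x D y]
      x' y' far \<open>x \<in> A\<close> \<open>y \<in> A\<close> by (simp add: dist_commute)
  have image_partners: "2 * (dist (T x) (T y))\<^sup>2 + 2 * D\<^sup>2 \<le> (dist (T x) (T y'))\<^sup>2 + (dist (T y) (T x'))\<^sup>2"
    using CAT0_nearest_points_sum[OF cat convex images(1,2) Tx' Ty'] far images(3,4) by blast
  have quadrilateral: "(dist x y')\<^sup>2 + (dist y x')\<^sup>2 \<le> (dist x y)\<^sup>2 + (dist x' y')\<^sup>2 + 2 * D\<^sup>2"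
    using CAT0_quadrilateral_inequality[OF cat, of x y' y x'] x' y' by (simp add: dist_commute)
  have "(dist (T x) (T y'))\<^sup>2 \<le> (dist x y')\<^sup>2" "(dist (T y) (T x'))\<^sup>2 \<le> (dist y x')\<^sup>2"
    using rel \<open>x \<in> A\<close> \<open>y \<in> A\<close> \<open>x' \<in> B\<close> \<open>y' \<in> B\<close>
    unfolding rel_nonexpansive_def by (auto intro: power_mono)
  then have "(dist (T x) (T y))\<^sup>2 \<le> (dist x y)\<^sup>2"
    using partners image_partners quadrilateral by linarith
  then show ?thesis by (rule power2_le_imp_le) simp
qed

lemma proximal_pair_commute: "proximal_pair A B \<longleftrightarrow> proximal_pair B A"
  unfolding proximal_pair_def setdist_sym[of A B] by (auto simp: dist_commute)

lemma cyclic_map_commute: "cyclic_map T A B \<longleftrightarrow> cyclic_map T B A"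
  unfolding cyclic_map_def by blast

lemma rel_nonexpansive_commute: "rel_nonexpansive T A B \<longleftrightarrow> rel_nonexpansive T B A"
  unfolding rel_nonexpansive_def by (metis dist_commute)

theorem mainTheorem11:
  fixes A B :: "'a::complete_space set" and T :: "'a \<Rightarrow> 'a"
  assumes "CAT0_space TYPE('a)"
    and "A \<noteq> {}" "B \<noteq> {}" "closed A" "closed B" "geod_convex A" "geod_convex B"
    and "bounded A" "bounded B"
    and "proximal_pair A B"
    and "cyclic_map T A B"
    and "rel_nonexpansive T A B"
  shows "\<forall>x\<in>A \<union> B. \<forall>y\<in>A \<union> B. dist (T x) (T y) \<le> dist x y"
proof (intro ballI)
  fix x y assume "x \<in> A \<union> B" "y \<in> A \<union> B"
  have swapped: "proximal_pair B A" "cyclic_map T B A" "rel_nonexpansive T B A"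
    using assms(10-12) proximal_pair_commute cyclic_map_commute rel_nonexpansive_commute
    by blast+
  consider "x \<in> A" "y \<in> A" | "x \<in> B" "y \<in> B" | "x \<in> A" "y \<in> B" | "x \<in> B" "y \<in> A"
    using \<open>x \<in> A \<union> B\<close> \<open>y \<in> A \<union> B\<close> by blast
  then show "dist (T x) (T y) \<le> dist x y"
  proof cases
    case 1
    then show ?thesis using rel_nonexpansive_within_side[OF assms(1,7,3,10-12)] by blast
  next
    case 2
    then show ?thesis using rel_nonexpansive_within_side[OF assms(1,6,2) swapped] by blast
  next
    case 3
    then show ?thesis using assms(12) unfolding rel_nonexpansive_def by blast
  next
    case 4
    then show ?thesis using swapped(3) unfolding rel_nonexpansive_def by blast
  qed
qed

end
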